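(* Let $u$ be a one-sided Sturmian sequence with left special sequence $l=l_1l_2\dots$. In the HB diagram of $X_u^+$: if $l_1=0$, then there are arrows $0\to1$, $0\to00$ and $1\to10$; if $l_1=1$, then there are arrows $1\to0$, $1\to11$ and $0\to01$.
   Context: A sequence $u\in\{0,1\}^{\mathbb N}$ is Sturmian if for every $n\ge1$ exactly $n+1$ distinct blocks of length $n$ occur in $u$. $X_u^+$ is the closure of $\{\sigma^n u:n\in\mathbb N\}$, $\sigma$ the shift $(\sigma x)_i=x_{i+1}$, and $\tilde X_u=\{x\in\{0,1\}^{\mathbb Z}: x_px_{p+1}\dots\in X_u^+\ \forall p\}$; the languages of $u$, $X_u^+$, $\tilde X_u$ coincide. For each $n$ there is a unique block $L_n$ of length $n$ with $0L_n$ and $1L_n$ in the language; these are prefixes of the left special sequence $l$. For a block $a_{-n}\dots a_0$ in the language, $\mathrm{fol}(a_{-n}\dots a_0)=\{b_0b_1\dots\in X_u^+:\exists b\in\tilde X_u,\ b_{-n}\dots b_0=a_{-n}\dots a_0\}$. A block $a_{-n}\dots a_0$ ($n\ge1$) is significant if $\mathrm{fol}(a_{-n}\dots a_0)\subsetneq\mathrm{fol}(a_{-n+1}\dots a_0)$; $0$ and $1$ are also significant. $\mathrm{sig}(\cdot)$ is the longest significant suffix. The HB diagram has vertex set the significant blocks and an arrow $\alpha\to\beta$ iff there is a symbol $b$ with $\alpha b$ in the language and $\beta=\mathrm{sig}(\alpha b)$. *)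

theory Defs
  imports "HOL-Analysis.Analysis"
begin

text \<open>Sequences over the alphabet {0,1} are modelled as nat-valued functions; blocks as lists.
  The space nat \<Rightarrow> nat carries the product topology (Function_Topology).\<close>

definition lang :: "(nat \<Rightarrow> nat) \<Rightarrow> nat list set" where
  "lang u = {w. \<exists>n. w = map (\<lambda>i. u (n + i)) [0..<length w]}"

definition sturmian :: "(nat \<Rightarrow> nat) \<Rightarrow> bool" where
  "sturmian u \<longleftrightarrow> (\<forall>i. u i \<in> {0,1}) \<and>
     (\<forall>n\<ge>1. card {w \<in> lang u. length w = n} = n + 1)"

definition shift :: "(nat \<Rightarrow> nat) \<Rightarrow> nat \<Rightarrow> (nat \<Rightarrow> nat)" where
  "shift u n = (\<lambda>i. u (n + i))"

definition Xplus :: "(nat \<Rightarrow> nat) \<Rightarrow> (nat \<Rightarrow> nat) set" where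
  "Xplus u = closure {shift u n | n. True}"

definition Xtilde :: "(nat \<Rightarrow> nat) \<Rightarrow> (int \<Rightarrow> nat) set" where
  "Xtilde u = {x. \<forall>p::int. (\<lambda>i::nat. x (p + int i)) \<in> Xplus u}"

text \<open>For a block a = a_{-n} ... a_0 (list of length n+1, a!k = a_{k-n}):
  followers b_0 b_1 ... of bi-infinite points b with b_{-n}..b_0 = a.\<close>
definition fol :: "(nat \<Rightarrow> nat) \<Rightarrow> nat list \<Rightarrow> (nat \<Rightarrow> nat) set" where
  "fol u a = {y \<in> Xplus u. \<exists>b \<in> Xtilde u.
      (\<forall>k < length a. b (int k - int (length a - 1)) = a ! k) \<and>
      y = (\<lambda>i. b (int i))}"

definition significant :: "(nat \<Rightarrow> nat) \<Rightarrow> nat list \<Rightarrow> bool" where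
  "significant u w \<longleftrightarrow> w \<in> {[0], [1]} \<or>
     (length w \<ge> 2 \<and> w \<in> lang u \<and> fol u w \<subset> fol u (tl w))"

definition sig :: "(nat \<Rightarrow> nat) \<Rightarrow> nat list \<Rightarrow> nat list" where
  "sig u w = drop (LEAST k. significant u (drop k w)) w"

definition HB_arrow :: "(nat \<Rightarrow> nat) \<Rightarrow> nat list \<Rightarrow> nat list \<Rightarrow> bool" where
  "HB_arrow u \<alpha> \<beta> \<longleftrightarrow> significant u \<alpha> \<and> significant u \<beta> \<and>
     (\<exists>b. \<alpha> @ [b] \<in> lang u \<and> \<beta> = sig u (\<alpha> @ [b]))"

text \<open>l = l_1 l_2 ... (indexed from 1) is the left special sequence: for every n,
  L_n = l_1 ... l_n satisfies 0 L_n, 1 L_n in the language.\<close>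
definition left_special_seq :: "(nat \<Rightarrow> nat) \<Rightarrow> (nat \<Rightarrow> nat) \<Rightarrow> bool" where
  "left_special_seq u l \<longleftrightarrow> (\<forall>n. (0 # map l [1..<n+1]) \<in> lang u \<and> (1 # map l [1..<n+1]) \<in> lang u)"

end

theory Submission
  imports Defs
begin

text \<open>Let \<open>a = l\<^sub>1\<close>, so \<open>0a\<close> and \<open>1a\<close> both occur, and let \<open>e = 1 - a\<close>.
  By Morse--Hedlund a Sturmian sequence is not eventually periodic; hence it is recurrent and has
  exactly one left special block of each length. Thus \<open>ae\<close> occurs but \<open>ee\<close> does not (otherwise
  \<open>e\<close> would be left special as well), so every occurrence of \<open>e\<close> is preceded by \<open>a\<close>:
  \<open>fol(ae) = fol(e)\<close> and \<open>sig(ae) = e\<close>. For \<open>c \<in> {0,1}\<close>, uniqueness of left special blocks yields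
  a right extension \<open>ax\<close> such that \<open>(1-c)ax\<close> occurs but \<open>cax\<close> does not; the future of a
  bi-infinite point through \<open>(1-c)ax\<close> lies in \<open>fol(a)\<close> but not in \<open>fol(ca)\<close>, so \<open>aa\<close> and \<open>ea\<close>
  are significant.\<close>

section \<open>Blocks and the Morse--Hedlund theorem\<close>

definition block :: "(nat \<Rightarrow> 'a) \<Rightarrow> nat \<Rightarrow> nat \<Rightarrow> 'a list" where
  "block u p n = map (\<lambda>i. u (p + i)) [0..<n]"

definition blocks :: "(nat \<Rightarrow> nat) \<Rightarrow> nat \<Rightarrow> nat list set" where
  "blocks u n = {w \<in> lang u. length w = n}"

definition eventually_periodic :: "(nat \<Rightarrow> 'a) \<Rightarrow> bool" where
  "eventually_periodic v \<longleftrightarrow> (\<exists>N P. 0 < P \<and> (\<forall>i\<ge>N. v (i + P) = v i))"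

lemma length_block [simp]: "length (block u p n) = n"
  by (simp add: block_def)

lemma lang_iff_block: "w \<in> lang u \<longleftrightarrow> (\<exists>p. w = block u p (length w))"
  by (simp add: lang_def block_def)

lemma block_in_lang [simp]: "block u p n \<in> lang u"
  by (auto simp: lang_iff_block)

lemma blocks_eq_range: "blocks u n = range (\<lambda>p. block u p n)"
  by (auto simp: blocks_def lang_iff_block)

lemma take_block: "m \<le> n \<Longrightarrow> take m (block u p n) = block u p m"
  by (simp add: block_def take_map)

lemma drop_block: "drop m (block u p n) = block u (p + m) (n - m)"
  by (auto simp: block_def drop_map add.assoc intro!: nth_equalityI)

lemma block_Suc: "block u p (Suc n) = u p # block u (Suc p) n"
  by (simp add: block_def upt_conv_Cons map_Suc_upt[symmetric] o_def del: upt_Suc)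

lemma block_append: "block u p m @ block u (p + m) n = block u p (m + n)"
  by (auto simp: block_def nth_append add.assoc intro!: nth_equalityI)

lemma block_eq_iff: "block u p n = block v q n \<longleftrightarrow> (\<forall>i<n. u (p + i) = v (q + i))"
  by (auto simp: block_def)

lemma lang_factor:
  assumes "v \<in> lang u" "s + n \<le> length v"
  shows "take n (drop s v) \<in> lang u"
proof -
  obtain q where "v = block u q (length v)" using assms(1) by (auto simp: lang_iff_block)
  hence "take n (drop s v) = take n (block u (q + s) (length v - s))"
    by (metis drop_block)
  also have "\<dots> = block u (q + s) n"
    using assms(2) by (simp add: take_block)
  finally show ?thesis by simp
qed

lemma finite_blocks:
  assumes "finite (range v)"
  shows "finite (blocks v n)"
proof (rule finite_subset)
  show "blocks v n \<subseteq> {xs. set xs \<subseteq> range v \<and> length xs = n}"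
    by (auto simp: blocks_eq_range block_def)
  show "finite {xs. set xs \<subseteq> range v \<and> length xs = n}"
    using assms by (rule finite_lists_length_eq)
qed

lemma card_blocks_0 [simp]: "card (blocks v 0) = 1"
proof -
  have "blocks v 0 = {[]}" by (auto simp: blocks_eq_range block_def)
  thus ?thesis by simp
qed

lemma take_blocks_Suc: "take m ` blocks v (Suc m) = blocks v m"
proof
  show "take m ` blocks v (Suc m) \<subseteq> blocks v m"
    by (auto simp: blocks_eq_range take_block)
  show "blocks v m \<subseteq> take m ` blocks v (Suc m)"
  proof
    fix w assume "w \<in> blocks v m"
    then obtain p where "w = take m (block v p (Suc m))"
      by (auto simp: blocks_eq_range take_block)
    thus "w \<in> take m ` blocks v (Suc m)" by (auto simp: blocks_eq_range)
  qed
qed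

lemma card_blocks_le_if_periodic_from:
  assumes "0 < P" and periodic: "\<forall>i\<ge>N. v (i + P) = v i"
  shows "card (blocks v n) \<le> N + P"
proof -
  have iterate: "v (j + k * P) = v j" if "j \<ge> N" for j k
  proof (induction k)
    case (Suc k)
    have "v (j + Suc k * P) = v ((j + k * P) + P)" by (simp add: algebra_simps)
    also have "\<dots> = v (j + k * P)" using periodic that by simp
    finally show ?case using Suc by simp
  qed simp
  define red where "red p = (if p < N then p else N + (p - N) mod P)" for p
  have "block v p n = block v (red p) n" for p
  proof (cases "p < N")
    case False
    have "v (p + i) = v (red p + i)" for i
    proof -
      have "v (p + i) = v ((red p + i) + ((p - N) div P) * P)"
        using False by (simp add: red_def)
      also have "\<dots> = v (red p + i)"
        by (rule iterate) (simp add: red_def False)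
      finally show ?thesis .
    qed
    thus ?thesis by (simp add: block_eq_iff)
  qed (simp add: red_def)
  moreover have "red p < N + P" for p using assms(1) by (simp add: red_def)
  ultimately have "blocks v n \<subseteq> (\<lambda>p. block v p n) ` {..<N + P}"
    unfolding blocks_eq_range by auto
  hence "card (blocks v n) \<le> card ((\<lambda>p. block v p n) ` {..<N + P})"
    by (intro card_mono) auto
  also have "\<dots> \<le> N + P" using card_image_le[of "{..<N + P}"] by simp
  finally show ?thesis .
qed

lemma eventually_periodic_bounded_blocks:
  assumes "eventually_periodic v"
  shows "\<exists>C. \<forall>n. card (blocks v n) \<le> C"
proof -
  obtain N P where "0 < P" "\<forall>i\<ge>N. v (i + P) = v i"
    using assms unfolding eventually_periodic_def by blast
  hence "\<forall>n. card (blocks v n) \<le> N + P" using card_blocks_le_if_periodic_from by blast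
  thus ?thesis ..
qed

lemma eventually_periodic_if_unique_right_extension:
  assumes fin: "finite (blocks v m)" and inj: "inj_on (take m) (blocks v (Suc m))"
  shows "eventually_periodic v"
proof -
  have extend: "block v p (Suc m) = block v q (Suc m)" if "block v p m = block v q m" for p q
  proof (rule inj_onD[OF inj])
    show "take m (block v p (Suc m)) = take m (block v q (Suc m))"
      using that by (simp add: take_block)
  qed (auto simp: blocks_eq_range)
  have "\<not> inj_on (\<lambda>p. block v p m) {..card (blocks v m)}"
  proof (rule pigeonhole)
    have "card ((\<lambda>p. block v p m) ` {..card (blocks v m)}) \<le> card (blocks v m)"
      by (rule card_mono[OF fin]) (auto simp: blocks_eq_range)
    thus "card ((\<lambda>p. block v p m) ` {..card (blocks v m)}) < card {..card (blocks v m)}"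
      by simp
  qed
  then obtain i j where "i \<noteq> j" "block v i m = block v j m"
    unfolding inj_on_def by blast
  then obtain i j where "i < j" and ij: "block v i m = block v j m"
    by (metis linorder_neqE_nat)
  have shifted: "block v (i + t) m = block v (j + t) m" for t
  proof (induction t)
    case (Suc t)
    have "drop 1 (block v (i + t) (Suc m)) = drop 1 (block v (j + t) (Suc m))"
      using extend[OF Suc.IH] by simp
    thus ?case by (simp add: drop_block)
  qed (simp add: ij)
  have same: "v (i + t) = v (j + t)" for t
    using extend[OF shifted[of t]] by (simp add: block_Suc)
  have "\<forall>k\<ge>i. v (k + (j - i)) = v k"
  proof (intro allI impI)
    fix k assume "i \<le> k"
    then obtain t where "k = i + t" using le_Suc_ex by blast
    thus "v (k + (j - i)) = v k" using same[of t] \<open>i < j\<close> by (simp add: add.commute)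
  qed
  thus ?thesis
    unfolding eventually_periodic_def using \<open>i < j\<close> by (intro exI[of _ i] exI[of _ "j - i"]) simp
qed

theorem Morse_Hedlund:
  assumes fin: "finite (range v)" and "card (blocks v n) \<le> n"
  shows "eventually_periodic v"
proof -
  have "\<exists>m. card (blocks v (Suc m)) \<le> card (blocks v m)"
  proof (rule ccontr)
    assume "\<nexists>m. card (blocks v (Suc m)) \<le> card (blocks v m)"
    hence grows: "card (blocks v k) < card (blocks v (Suc k))" for k
      by (simp add: not_le)
    have "k + 1 \<le> card (blocks v k)" for k
    proof (induction k)
      case (Suc k)
      thus ?case using grows[of k] by simp
    qed simp
    from this[of n] show False using \<open>card (blocks v n) \<le> n\<close> by simp
  qed
  then obtain m where m: "card (blocks v (Suc m)) \<le> card (blocks v m)" ..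
  have "card (take m ` blocks v (Suc m)) = card (blocks v (Suc m))"
    using m card_image_le[OF finite_blocks[OF fin], of "take m" "Suc m"]
    by (simp add: take_blocks_Suc)
  hence "inj_on (take m) (blocks v (Suc m))"
    using inj_on_iff_eq_card[OF finite_blocks[OF fin]] by blast
  thus ?thesis
    using eventually_periodic_if_unique_right_extension finite_blocks[OF fin] by blast
qed

lemma eventually_periodic_if_suffix:
  assumes "eventually_periodic (\<lambda>i. u (k + i))"
  shows "eventually_periodic u"
proof -
  obtain N P where "0 < P" and periodic: "\<forall>i\<ge>N. u (k + (i + P)) = u (k + i)"
    using assms unfolding eventually_periodic_def by blast
  have "\<forall>i\<ge>k + N. u (i + P) = u i"
  proof (intro allI impI)
    fix i assume "i \<ge> k + N"
    thus "u (i + P) = u i" using periodic[rule_format, of "i - k"] by simp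
  qed
  thus ?thesis using \<open>0 < P\<close> unfolding eventually_periodic_def by blast
qed

section \<open>Sturmian sequences\<close>

definition left_special :: "(nat \<Rightarrow> nat) \<Rightarrow> nat list \<Rightarrow> bool" where
  "left_special u w \<longleftrightarrow> 0 # w \<in> lang u \<and> 1 # w \<in> lang u"

lemma sturmian_letter: "sturmian u \<Longrightarrow> u i \<in> {0, 1}"
  by (simp add: sturmian_def)

lemma card_blocks_sturmian: "sturmian u \<Longrightarrow> card (blocks u n) = n + 1"
  using card_blocks_0[of u] by (cases "n = 0") (auto simp: sturmian_def blocks_def)

lemma finite_range_sturmian:
  assumes "sturmian u"
  shows "finite (range u)"
proof (rule finite_subset)
  show "range u \<subseteq> {0, 1}" using sturmian_letter[OF assms] by (simp add: image_subset_iff)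
qed simp

lemma finite_blocks_sturmian: "sturmian u \<Longrightarrow> finite (blocks u n)"
  by (simp add: finite_blocks finite_range_sturmian)

lemma sturmian_not_eventually_periodic:
  assumes "sturmian u"
  shows "\<not> eventually_periodic u"
proof
  assume "eventually_periodic u"
  then obtain C where "\<forall>n. card (blocks u n) \<le> C"
    using eventually_periodic_bounded_blocks by blast
  hence "card (blocks u C) \<le> C" by blast
  thus False using card_blocks_sturmian[OF assms, of C] by simp
qed

lemma sturmian_recurrent:
  assumes st: "sturmian u" and w: "w \<in> lang u"
  shows "\<exists>p\<ge>k. w = block u p (length w)"
proof (rule ccontr)
  assume late: "\<not> ?thesis"
  define v where "v = (\<lambda>i. u (k + i))"
  have "blocks v (length w) \<subseteq> blocks u (length w) - {w}"
  proof
    fix x assume "x \<in> blocks v (length w)"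
    then obtain p where x: "x = block u (k + p) (length w)"
      by (auto simp: blocks_eq_range v_def block_def add.assoc)
    hence "x \<noteq> w" using late le_add1 by blast
    thus "x \<in> blocks u (length w) - {w}" using x by (simp add: blocks_eq_range)
  qed
  hence "card (blocks v (length w)) \<le> card (blocks u (length w) - {w})"
    by (intro card_mono) (simp_all add: finite_blocks_sturmian[OF st])
  also have "\<dots> = length w"
    using w card_blocks_sturmian[OF st] finite_blocks_sturmian[OF st] by (simp add: blocks_def)
  finally have "card (blocks v (length w)) \<le> length w" .
  moreover have "finite (range v)"
    using finite_range_sturmian[OF st] by (rule finite_subset[rotated]) (auto simp: v_def)
  ultimately have "eventually_periodic v"
    using Morse_Hedlund by blast
  hence "eventually_periodic u"
    unfolding v_def by (rule eventually_periodic_if_suffix[of u k])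
  thus False using sturmian_not_eventually_periodic[OF st] by contradiction
qed

lemma lang_extend_both:
  assumes st: "sturmian u" and w: "w \<in> lang u"
  shows "\<exists>a e. a # w @ [e] \<in> lang u"
proof -
  obtain p where "p \<ge> 1" and p: "w = block u p (length w)"
    using sturmian_recurrent[OF st w, of 1] by blast
  have "block u (p - 1) (Suc (Suc (length w))) = u (p - 1) # block u p (Suc (length w))"
    using \<open>p \<ge> 1\<close> by (simp add: block_Suc)
  also have "block u p (Suc (length w)) = block u p (length w) @ [u (p + length w)]"
    by (simp add: block_def)
  finally have "u (p - 1) # w @ [u (p + length w)] \<in> lang u"
    using p block_in_lang[of u "p - 1" "Suc (Suc (length w))"] by simp
  thus ?thesis by blast
qed

lemma lang_extend_left:
  assumes "sturmian u" "w \<in> lang u"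
  shows "\<exists>a. a # w \<in> lang u"
proof -
  obtain a e where "a # w @ [e] \<in> lang u" using lang_extend_both[OF assms] by blast
  hence "take (Suc (length w)) (drop 0 (a # w @ [e])) \<in> lang u"
    by (rule lang_factor) simp
  thus ?thesis by auto
qed

lemma left_special_unique:
  assumes st: "sturmian u" and "left_special u x" "left_special u y" "length x = length y"
  shows "x = y"
proof (rule ccontr)
  assume "x \<noteq> y"
  define n where "n = length x"
  \<comment> \<open>\<open>g\<close> picks one left extension of each block of length \<open>n\<close>; the other left extensions of
    \<open>x\<close> and \<open>y\<close> are two further blocks of length \<open>n + 1\<close>, one too many.\<close>
  define g where "g w = (SOME a. a # w \<in> lang u) # w" for w
  have g_blocks: "g w \<in> blocks u (Suc n)" if "w \<in> blocks u n" for w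
    using that someI_ex[OF lang_extend_left[OF st]] by (auto simp: g_def blocks_def)
  have "inj_on g (blocks u n)" by (rule inj_onI) (simp add: g_def)
  hence card_g: "card (g ` blocks u n) = n + 1"
    using card_image card_blocks_sturmian[OF st] by metis
  have extra: "\<exists>z \<in> blocks u (Suc n) - g ` blocks u n. tl z = w"
    if "left_special u w" "length w = n" for w
  proof -
    have "\<exists>c \<in> {0, 1}. c # w \<noteq> g w"
      by (cases "g w = 0 # w") auto
    then obtain c where "c \<in> {0, 1}" "c # w \<noteq> g w" ..
    hence "c # w \<notin> g ` blocks u n" by (auto simp: g_def)
    moreover have "c # w \<in> blocks u (Suc n)"
      using that \<open>c \<in> {0, 1}\<close> by (auto simp: left_special_def blocks_def)
    ultimately show ?thesis by force
  qed
  obtain zx zy where zx: "zx \<in> blocks u (Suc n) - g ` blocks u n" "tl zx = x"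
    and zy: "zy \<in> blocks u (Suc n) - g ` blocks u n" "tl zy = y"
    using extra assms(2-4) n_def by metis
  have "g ` blocks u n \<union> {zx, zy} \<subseteq> blocks u (Suc n)"
    using g_blocks zx zy by blast
  hence "card (g ` blocks u n \<union> {zx, zy}) \<le> n + 2"
    using card_mono[OF finite_blocks_sturmian[OF st]] card_blocks_sturmian[OF st] by fastforce
  moreover have "card (g ` blocks u n \<union> {zx, zy}) = n + 3"
    using zx zy \<open>x \<noteq> y\<close> card_g finite_blocks_sturmian[OF st, of n] by (auto simp: card_insert_if)
  ultimately show False by simp
qed

lemma sturmian_two_right_extensions:
  assumes st: "sturmian u" and w: "w \<in> lang u"
  shows "\<exists>x y. length x = length y \<and> x \<noteq> y \<and> w @ x \<in> lang u \<and> w @ y \<in> lang u"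
proof (rule ccontr)
  assume unique: "\<not> ?thesis"
  obtain p where p: "w = block u p (length w)"
    using w lang_iff_block by blast
  obtain q where "q \<ge> p + 1" and q: "w = block u q (length w)"
    using sturmian_recurrent[OF st w] by blast
  have continue: "w @ block u (r + length w) n \<in> lang u" if "w = block u r (length w)" for r n
  proof -
    have "block u r (length w) @ block u (r + length w) n \<in> lang u"
      by (simp add: block_append)
    thus ?thesis unfolding that[symmetric] .
  qed
  have "block u (p + length w) n = block u (q + length w) n" for n
    using unique continue[OF p, of n] continue[OF q, of n] by (metis length_block)
  hence after: "u (p + length w + j) = u (q + length w + j)" for j
    by (meson block_eq_iff lessI)
  have "block u p (length w) = block u q (length w)" using p q by metis
  hence before: "u (p + i) = u (q + i)" if "i < length w" for i
    using that by (simp add: block_eq_iff)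
  have same: "u (p + i) = u (q + i)" for i
    using before[of i] after[of "i - length w"] by (cases "i < length w") simp_all
  have "\<forall>i\<ge>p. u (i + (q - p)) = u i"
  proof (intro allI impI)
    fix i assume "p \<le> i"
    then obtain t where "i = p + t" using le_Suc_ex by blast
    thus "u (i + (q - p)) = u i" using same[of t] \<open>q \<ge> p + 1\<close> by (simp add: add.commute)
  qed
  hence "eventually_periodic u"
    unfolding eventually_periodic_def using \<open>q \<ge> p + 1\<close>
    by (intro exI[of _ p] exI[of _ "q - p"]) simp
  thus False using sturmian_not_eventually_periodic[OF st] by contradiction
qed

lemma right_extension_separating_left_extensions:
  assumes st: "sturmian u" and c: "c \<in> {0, 1}" and cw: "c # w \<in> lang u"
  shows "\<exists>x. c # w @ x \<in> lang u \<and> (1 - c) # w @ x \<notin> lang u"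
proof (rule ccontr)
  assume "\<not> ?thesis"
  hence both: "left_special u (w @ x)" if "c # w @ x \<in> lang u" for x
    using that c by (auto simp: left_special_def)
  obtain x y where "length x = length y" "x \<noteq> y" "c # w @ x \<in> lang u" "c # w @ y \<in> lang u"
    using sturmian_two_right_extensions[OF st cw] by auto
  hence "w @ x = w @ y"
    using left_special_unique[OF st both both] by simp
  thus False using \<open>x \<noteq> y\<close> by simp
qed

lemma sturmian_letter_in_lang:
  assumes st: "sturmian u" and c: "c \<in> {0, 1}"
  shows "[c] \<in> lang u"
proof -
  have sub: "blocks u 1 \<subseteq> {[0], [1]}"
  proof
    fix w assume "w \<in> blocks u 1"
    then obtain p where "w = [u p]" by (auto simp: blocks_eq_range block_def)
    thus "w \<in> {[0], [1]}" using sturmian_letter[OF st, of p] by auto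
  qed
  have "card (blocks u 1) = card {[0::nat], [1]}"
    using card_blocks_sturmian[OF st, of 1] by simp
  hence "blocks u 1 = {[0], [1]}" using card_subset_eq[OF _ sub] by simp
  thus ?thesis using c by (auto simp: blocks_def)
qed

lemma left_special_letter:
  assumes st: "sturmian u" and "left_special u [a]"
  shows "a \<in> {0, 1}"
proof -
  have "[0, a] \<in> lang u" using assms(2) by (simp add: left_special_def)
  then obtain p where "[0, a] = block u p (length [0, a])" unfolding lang_iff_block ..
  hence "a = u (Suc p)" by (simp add: block_def)
  thus ?thesis using sturmian_letter[OF st] by simp
qed

lemma sturmian_letter_followed_by_other:
  assumes st: "sturmian u" and c: "c \<in> {0, 1}"
  shows "[c, 1 - c] \<in> lang u"
proof (rule ccontr)
  assume no_switch: "[c, 1 - c] \<notin> lang u"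
  obtain p where "[c] = block u p 1"
    using sturmian_letter_in_lang[OF st c] by (auto simp: lang_iff_block)
  hence "u p = c" by (simp add: block_def)
  have stays: "u (p + k) = c" for k
  proof (induction k)
    case (Suc k)
    have "[u (p + k), u (Suc (p + k))] \<in> lang u"
      using block_in_lang[of u "p + k" 2] by (simp add: block_def numeral_2_eq_2)
    thus ?case using Suc no_switch sturmian_letter[OF st, of "Suc (p + k)"] c by auto
  qed (simp add: \<open>u p = c\<close>)
  have "\<forall>i\<ge>p. u (i + 1) = u i"
  proof (intro allI impI)
    fix i assume "p \<le> i"
    then obtain k where "i = p + k" using le_Suc_ex by blast
    thus "u (i + 1) = u i" using stays[of k] stays[of "Suc k"] by simp
  qed
  hence "eventually_periodic u" unfolding eventually_periodic_def by blast
  thus False using sturmian_not_eventually_periodic[OF st] by contradiction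
qed

lemma sturmian_no_square_of_other_letter:
  assumes st: "sturmian u" and ls: "left_special u [a]"
  shows "[1 - a, 1 - a] \<notin> lang u"
proof
  have a: "a \<in> {0, 1}" by (rule left_special_letter[OF st ls])
  assume "[1 - a, 1 - a] \<in> lang u"
  moreover have "[a, 1 - a] \<in> lang u" by (rule sturmian_letter_followed_by_other[OF st a])
  ultimately have "left_special u [1 - a]" using a by (auto simp: left_special_def)
  hence "[a] = [1 - a]" using left_special_unique[OF st ls] by simp
  thus False using a by auto
qed

section \<open>Two-sided points and followers\<close>

lemma closure_fun_nat_iff:
  fixes S :: "(nat \<Rightarrow> 'a::discrete_topology) set"
  shows "x \<in> closure S \<longleftrightarrow> (\<forall>n. \<exists>s\<in>S. \<forall>i<n. s i = x i)"
proof
  assume x: "x \<in> closure S"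
  show "\<forall>n. \<exists>s\<in>S. \<forall>i<n. s i = x i"
  proof
    fix n
    let ?C = "{f. \<forall>i\<in>{..<n}. f ((\<lambda>i. i) i) \<in> (\<lambda>i. {x i}) i}"
    have "open ?C"
      by (rule product_topology_basis') (auto simp: open_discrete)
    moreover have "x \<in> ?C" by auto
    ultimately have "?C \<inter> S \<noteq> {}"
      using x open_Int_closure_eq_empty by blast
    thus "\<exists>s\<in>S. \<forall>i<n. s i = x i" by auto
  qed
next
  assume H: "\<forall>n. \<exists>s\<in>S. \<forall>i<n. s i = x i"
  show "x \<in> closure S"
    unfolding closure_iff_nhds_not_empty
  proof (intro allI impI)
    fix A T assume "T \<subseteq> A" "open T" "x \<in> T"
    then obtain U where fin: "finite {i. U i \<noteq> topspace euclidean}"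
      and xU: "x \<in> Pi\<^sub>E UNIV U" and UT: "Pi\<^sub>E UNIV U \<subseteq> T"
      unfolding open_fun_def openin_product_topology_alt by auto
    obtain k where k: "{i. U i \<noteq> topspace euclidean} \<subseteq> {..<k}"
      using finite_nat_bounded[OF fin] by blast
    obtain s where s: "s \<in> S" "\<forall>i<k. s i = x i" using H by blast
    have "s i \<in> U i" for i
    proof (cases "i < k")
      case False
      hence "U i = UNIV" using k by auto
      thus ?thesis by simp
    qed (use s xU in auto)
    hence "s \<in> Pi\<^sub>E UNIV U" by auto
    thus "S \<inter> A \<noteq> {}" using UT \<open>T \<subseteq> A\<close> s(1) by blast
  qed
qed

definition nested :: "(nat \<Rightarrow> 'a list) \<Rightarrow> bool" where
  "nested W \<longleftrightarrow> (\<forall>k. \<exists>a e. W (Suc k) = a # W k @ [e])"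

text \<open>\<open>W k\<close> extends \<open>W 0\<close> by \<open>k\<close> letters on each side; the limit places \<open>W 0\<close> at the
  positions \<open>0, \<dots>, length (W 0) - 1\<close>.\<close>
definition limit_point :: "(nat \<Rightarrow> 'a list) \<Rightarrow> int \<Rightarrow> 'a" where
  "limit_point W z = W (nat \<bar>z\<bar> + 1) ! nat (z + int (nat \<bar>z\<bar> + 1))"

lemma length_nested:
  assumes "nested W"
  shows "length (W k) = length (W 0) + 2 * k"
proof (induction k)
  case (Suc k)
  have "\<exists>a e. W (Suc k) = a # W k @ [e]" using assms unfolding nested_def by (rule spec)
  then obtain a e where "W (Suc k) = a # W k @ [e]" by blast
  thus ?case using Suc by simp
qed simp

lemma nth_nested:
  assumes "nested W" and "i < length (W k)"
  shows "W (k + m) ! (i + m) = W k ! i"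
proof (induction m)
  case (Suc m)
  have "\<exists>a e. W (Suc (k + m)) = a # W (k + m) @ [e]"
    using assms(1) unfolding nested_def by (rule spec)
  then obtain a e where "W (Suc (k + m)) = a # W (k + m) @ [e]" by blast
  moreover have "i + m < length (W (k + m))" using assms(2) length_nested[OF assms(1), of k] length_nested[OF assms(1), of "k + m"] by simp
  ultimately show ?case using Suc.IH by (simp add: nth_append)
qed simp

lemma limit_point_eq:
  assumes W: "nested W" and "- int k \<le> z" "z < int (length (W 0) + k)"
  shows "limit_point W z = W k ! nat (z + int k)"
proof -
  have coherent: "W (k + m) ! nat (z + int (k + m)) = W k ! nat (z + int k)"
    if "- int k \<le> z" "z < int (length (W 0) + k)" for k m
  proof -
    have "nat (z + int (k + m)) = nat (z + int k) + m" using that(1) by simp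
    moreover have "nat (z + int k) < length (W k)" using that length_nested[OF W, of k] by simp
    ultimately show ?thesis using nth_nested[OF W] by simp
  qed
  define K where "K = nat \<bar>z\<bar> + 1"
  have K: "- int K \<le> z" "z < int (length (W 0) + K)" by (auto simp: K_def)
  have "limit_point W z = W K ! nat (z + int K)" by (simp add: limit_point_def K_def)
  also have "\<dots> = W k ! nat (z + int k)"
  proof (cases "k \<le> K")
    case True
    then obtain m where "K = k + m" using le_Suc_ex by blast
    thus ?thesis using coherent[OF assms(2,3), of m] by simp
  next
    case False
    then obtain m where "k = K + m" using le_Suc_ex[of K k] by auto
    thus ?thesis using coherent[OF K, of m] by simp
  qed
  finally show ?thesis .
qed

lemma limit_point_window:
  fixes p :: int and n :: nat
  assumes W: "nested W"
  defines "k \<equiv> nat \<bar>p\<bar> + n"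
  shows "map (\<lambda>i. limit_point W (p + int i)) [0..<n] = take n (drop (nat (p + int k)) (W k))"
    and "nat (p + int k) + n \<le> length (W k)"
proof -
  define s where "s = nat (p + int k)"
  have "p + int k \<ge> 0" by (simp add: k_def)
  hence position: "nat (p + int i + int k) = s + i" for i
    unfolding s_def by arith
  show fits: "nat (p + int k) + n \<le> length (W k)"
    using length_nested[OF W, of k] by (simp add: k_def)
  show "map (\<lambda>i. limit_point W (p + int i)) [0..<n] = take n (drop (nat (p + int k)) (W k))"
  proof (rule nth_equalityI)
    fix i assume "i < length (map (\<lambda>i. limit_point W (p + int i)) [0..<n])"
    hence "i < n" by simp
    hence "limit_point W (p + int i) = W k ! (s + i)"
      using limit_point_eq[OF W, of k "p + int i"] position[of i] by (simp add: k_def)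
    thus "map (\<lambda>i. limit_point W (p + int i)) [0..<n] ! i = take n (drop (nat (p + int k)) (W k)) ! i"
      using \<open>i < n\<close> fits by (simp add: s_def)
  qed (use fits in simp)
qed

lemma Xplus_iff: "x \<in> Xplus u \<longleftrightarrow> (\<forall>n. block x 0 n \<in> lang u)"
proof -
  have "(\<exists>s\<in>{shift u m |m. True}. \<forall>i<n. s i = x i) \<longleftrightarrow> (\<exists>m. block x 0 n = block u m n)" for n
    by (auto simp: shift_def block_eq_iff eq_commute[of "x _"])
  thus ?thesis unfolding Xplus_def closure_fun_nat_iff by (simp add: lang_iff_block)
qed

lemma Xtilde_iff: "b \<in> Xtilde u \<longleftrightarrow> (\<forall>p n. map (\<lambda>i. b (p + int i)) [0..<n] \<in> lang u)"
  by (simp add: Xtilde_def Xplus_iff block_def)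

lemma Xtilde_future:
  assumes "b \<in> Xtilde u"
  shows "(\<lambda>i. b (int i)) \<in> Xplus u"
proof -
  have "(\<lambda>i. b (0 + int i)) \<in> Xplus u" using assms unfolding Xtilde_def by blast
  thus ?thesis by simp
qed

lemma Xtilde_shift:
  assumes "b \<in> Xtilde u"
  shows "(\<lambda>z. b (z + c)) \<in> Xtilde u"
  unfolding Xtilde_iff
proof (intro allI)
  fix p n
  have "map (\<lambda>i. b ((p + c) + int i)) [0..<n] \<in> lang u"
    using assms by (simp add: Xtilde_iff)
  thus "map (\<lambda>i. b (p + int i + c)) [0..<n] \<in> lang u" by (simp add: ac_simps)
qed

lemma limit_point_in_Xtilde:
  assumes "nested W" and "\<And>k. W k \<in> lang u"
  shows "limit_point W \<in> Xtilde u"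
  unfolding Xtilde_iff
  using limit_point_window[OF assms(1)] lang_factor[OF assms(2)] by metis

lemma exists_nested_extensions:
  assumes st: "sturmian u" and w: "w \<in> lang u"
  shows "\<exists>W. nested W \<and> W 0 = w \<and> (\<forall>k. W k \<in> lang u)"
proof -
  define grow where "grow v = (SOME z. \<exists>a e. z = a # v @ [e] \<and> z \<in> lang u)" for v
  have grow: "\<exists>a e. grow v = a # v @ [e] \<and> grow v \<in> lang u" if "v \<in> lang u" for v
    unfolding grow_def by (rule someI_ex) (use lang_extend_both[OF st that] in blast)
  define W where "W k = (grow ^^ k) w" for k
  have W_lang: "W k \<in> lang u" for k
  proof (induction k)
    case (Suc k)
    thus ?case using grow by (auto simp: W_def)
  qed (simp add: W_def w)
  have "nested W"
    unfolding nested_def using grow[OF W_lang] by (auto simp: W_def)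
  thus ?thesis using W_lang by (auto simp: W_def)
qed

lemma exists_Xtilde_through:
  assumes "sturmian u" and "w \<in> lang u"
  shows "\<exists>b\<in>Xtilde u. \<forall>j<length w. b (int j) = w ! j"
proof -
  obtain W where W: "nested W" "W 0 = w" "\<And>k. W k \<in> lang u"
    using exists_nested_extensions[OF assms] by blast
  have "limit_point W (int j) = w ! j" if "j < length w" for j
    using limit_point_eq[OF W(1), of 0 "int j"] that W(2) by simp
  thus ?thesis using limit_point_in_Xtilde[OF W(1,3)] by blast
qed

lemma mem_fol_singleton:
  "y \<in> fol u [a] \<longleftrightarrow> (\<exists>b\<in>Xtilde u. b 0 = a \<and> y = (\<lambda>i. b (int i)))"
  by (auto simp: fol_def Xtilde_future)

lemma mem_fol_pair:
  "y \<in> fol u [d, a] \<longleftrightarrow> (\<exists>b\<in>Xtilde u. b (-1) = d \<and> b 0 = a \<and> y = (\<lambda>i. b (int i)))"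
proof -
  have window: "(\<forall>k<length [d, a]. b (int k - int (length [d, a] - 1)) = [d, a] ! k)
      \<longleftrightarrow> b (-1) = d \<and> b 0 = a" for b :: "int \<Rightarrow> nat"
  proof
    assume "\<forall>k<length [d, a]. b (int k - int (length [d, a] - 1)) = [d, a] ! k"
    from this[rule_format, of 0] this[rule_format, of 1] show "b (-1) = d \<and> b 0 = a" by simp
  qed (auto simp: less_Suc_eq)
  show ?thesis unfolding fol_def window by (auto simp: Xtilde_future)
qed

lemma fol_pair_subset: "fol u [d, a] \<subseteq> fol u [a]"
  by (auto simp: mem_fol_singleton mem_fol_pair)

lemma Xtilde_letter:
  assumes st: "sturmian u" and b: "b \<in> Xtilde u"
  shows "b z \<in> {0, 1}"
proof -
  have "map (\<lambda>i. b (z + int i)) [0..<1] \<in> lang u" using b unfolding Xtilde_iff by blast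
  hence "[b z] \<in> lang u" by simp
  then obtain p where "[b z] = block u p 1" by (auto simp: lang_iff_block)
  thus ?thesis using sturmian_letter[OF st, of p] by (simp add: block_def)
qed

lemma fol_singleton_subset_fol_pair:
  assumes st: "sturmian u" and d: "d \<in> {0, 1}" and "[1 - d, a] \<notin> lang u"
  shows "fol u [a] \<subseteq> fol u [d, a]"
proof
  fix y assume "y \<in> fol u [a]"
  then obtain b where b: "b \<in> Xtilde u" "b 0 = a" "y = (\<lambda>i. b (int i))"
    by (auto simp: mem_fol_singleton)
  have "map (\<lambda>i. b (-1 + int i)) [0..<2] \<in> lang u"
    using b(1) unfolding Xtilde_iff by blast
  hence "[b (-1), a] \<in> lang u" using b(2) by (simp add: numeral_2_eq_2)
  hence "b (-1) = d"
    using Xtilde_letter[OF st b(1), of "-1"] d \<open>[1 - d, a] \<notin> lang u\<close> by auto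
  thus "y \<in> fol u [d, a]" using b by (auto simp: mem_fol_pair)
qed

lemma fol_pair_psubset:
  assumes st: "sturmian u" and "d # a # x \<in> lang u" and "e # a # x \<notin> lang u"
  shows "fol u [e, a] \<subset> fol u [a]"
proof -
  obtain b where b: "b \<in> Xtilde u" and through: "\<forall>j<length (d # a # x). b (int j) = (d # a # x) ! j"
    using exists_Xtilde_through[OF st assms(2)] by blast
  define y where "y = (\<lambda>i. b (int i + 1))"
  have y: "y t = (a # x) ! t" if "t < length (a # x)" for t
    using through[rule_format, of "Suc t"] that by (simp add: y_def add.commute)
  have "y \<in> fol u [a]"
    unfolding mem_fol_singleton
    using y[of 0] by (intro bexI[OF _ Xtilde_shift[OF b, of 1]]) (simp add: y_def)
  moreover have "y \<notin> fol u [e, a]"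
  proof
    assume "y \<in> fol u [e, a]"
    then obtain b' where b': "b' \<in> Xtilde u" "b' (-1) = e" "y = (\<lambda>i. b' (int i))"
      by (auto simp: mem_fol_pair)
    have "map y [0..<length (a # x)] = a # x"
      by (rule nth_equalityI) (simp_all add: y del: upt_Suc)
    hence "map (\<lambda>i. b' (-1 + int i)) [0..<Suc (length (a # x))] = e # a # x"
      using b'(2,3) by (simp add: upt_conv_Cons map_Suc_upt[symmetric] o_def del: upt_Suc)
    moreover have "map (\<lambda>i. b' (-1 + int i)) [0..<Suc (length (a # x))] \<in> lang u"
      using b'(1) unfolding Xtilde_iff by blast
    ultimately show False using assms(3) by simp
  qed
  ultimately show ?thesis using fol_pair_subset by blast
qed

section \<open>Significant blocks and arrows\<close>

lemma significant_pair_if_left_special: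
  assumes st: "sturmian u" and "left_special u [a]" and c: "c \<in> {0, 1}"
  shows "significant u [c, a]"
proof -
  have "(1 - c) # [a] \<in> lang u" "1 - c \<in> {0, 1}"
    using assms(2) c by (auto simp: left_special_def)
  then obtain x where "(1 - c) # [a] @ x \<in> lang u" "(1 - (1 - c)) # [a] @ x \<notin> lang u"
    using right_extension_separating_left_extensions[OF st] by blast
  moreover have "1 - (1 - c) = c" using c by auto
  ultimately have "fol u [c, a] \<subset> fol u [a]"
    using fol_pair_psubset[OF st, of "1 - c" a x c] by simp
  moreover have "[c, a] \<in> lang u" using assms(2) c by (auto simp: left_special_def)
  ultimately show ?thesis by (simp add: significant_def)
qed

lemma not_significant_pair:
  assumes st: "sturmian u" and d: "d \<in> {0, 1}" and "[1 - d, a] \<notin> lang u"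
  shows "\<not> significant u [d, a]"
  using fol_singleton_subset_fol_pair[OF assms] by (auto simp: significant_def)

lemma sig_significant: "significant u w \<Longrightarrow> sig u w = w"
  by (simp add: sig_def Least_eq_0)

lemma sig_pair:
  assumes "\<not> significant u [x, y]" and "significant u [y]"
  shows "sig u [x, y] = [y]"
proof -
  have "(LEAST k. significant u (drop k [x, y])) = 1"
  proof (rule Least_equality)
    show "significant u (drop 1 [x, y])" using assms(2) by simp
    fix k assume "significant u (drop k [x, y])"
    thus "1 \<le> k" using assms(1) by (cases k) auto
  qed
  thus ?thesis by (simp add: sig_def)
qed

lemma HB_arrow_to_pair:
  assumes "c \<in> {0, 1}" and "significant u [c, b]"
  shows "HB_arrow u [c] [c, b]"
  using assms sig_significant[OF assms(2)] by (auto simp: HB_arrow_def significant_def)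

lemma HB_arrow_to_letter:
  assumes "c \<in> {0, 1}" "b \<in> {0, 1}" "[c, b] \<in> lang u" "\<not> significant u [c, b]"
  shows "HB_arrow u [c] [b]"
proof -
  have "significant u [c]" "significant u [b]" using assms(1,2) by (auto simp: significant_def)
  thus ?thesis using assms(3,4) sig_pair[OF assms(4)] by (auto simp: HB_arrow_def)
qed

lemma HB_arrows_from_left_special_letter:
  assumes st: "sturmian u" and ls: "left_special u [a]"
  shows "HB_arrow u [a] [1 - a] \<and> HB_arrow u [a] [a, a] \<and> HB_arrow u [1 - a] [1 - a, a]"
proof (intro conjI)
  have a: "a \<in> {0, 1}" by (rule left_special_letter[OF st ls])
  hence e: "1 - a \<in> {0, 1}" by auto
  show "HB_arrow u [a] [1 - a]"
    using HB_arrow_to_letter[OF a e sturmian_letter_followed_by_other[OF st a]]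
      not_significant_pair[OF st a sturmian_no_square_of_other_letter[OF st ls]] by blast
  show "HB_arrow u [a] [a, a]"
    by (rule HB_arrow_to_pair[OF a significant_pair_if_left_special[OF st ls a]])
  show "HB_arrow u [1 - a] [1 - a, a]"
    by (rule HB_arrow_to_pair[OF e significant_pair_if_left_special[OF st ls e]])
qed

theorem lemma4p8:
  fixes u l :: "nat \<Rightarrow> nat"
  assumes "sturmian u"
    and "left_special_seq u l"
  shows "(l 1 = 0 \<longrightarrow> HB_arrow u [0] [1] \<and> HB_arrow u [0] [0,0] \<and> HB_arrow u [1] [1,0]) \<and>
         (l 1 = 1 \<longrightarrow> HB_arrow u [1] [0] \<and> HB_arrow u [1] [1,1] \<and> HB_arrow u [0] [0,1])"
proof -
  have "left_special u [l 1]"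
    using assms(2) unfolding left_special_seq_def left_special_def by (auto dest: spec[of _ 1])
  from HB_arrows_from_left_special_letter[OF assms(1) this] show ?thesis by auto
qed

end
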